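(* Let $n\ge2$, $\kappa>0$, and let $\tilde\theta:\mathbb R\to[0,\infty)$ be locally Lipschitz and nondecreasing with $\tilde\theta(s)=0$ for $s\le 0$ and $\tilde\theta(s)>0$ for $s>0$; set $\theta(a,b)=\tilde\theta(\min(a,b))$. Let $\rho:[0,\infty)\to\mathbb R^n$ be the solution of $$\frac{d\rho_j}{dt}=\kappa\sum_{k=1}^n\theta(\rho_j,\rho_k)(\rho_j-\rho_k),\qquad j=1,\dots,n,$$ with $\rho(0)\in\mathcal P$ satisfying $\rho_1(0)>\max_{1<j\le n}\rho_j(0)$. Then for all $t\ge0$, $$\rho_1(t)-\max_{1<j\le n}\rho_j(t)\ \ge\ \rho_1(0)-\max_{1<j\le n}\rho_j(0).$$
   Context: $\mathcal P=\{\rho\in\mathbb R^n:\rho_i\ge0\ \forall i,\ \sum_{i=1}^n\rho_i=1\}$ denotes the probability simplex. *)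

theory Defs
  imports "HOL-Analysis.Analysis"
begin

definition locally_lipschitz :: "(real \<Rightarrow> real) \<Rightarrow> bool" where
  "locally_lipschitz f \<longleftrightarrow> (\<forall>x. \<exists>e>0. \<exists>L. L-lipschitz_on (cball x e) f)"

definition prob_simplex :: "nat \<Rightarrow> (nat \<Rightarrow> real) set" where
  "prob_simplex n = {r. (\<forall>i\<in>{1..n}. r i \<ge> 0) \<and> (\<Sum>i=1..n. r i) = 1}"

end

theory Submission
  imports Defs
begin

text \<open>Let \<open>j\<close> be a follower with the largest value at time \<open>t\<close>, still behind the leader.
  Every term of \<open>\<rho>\<^sub>j\<close>'s interaction sum is dominated by the corresponding term of
  \<open>\<rho>\<^sub>1\<close>'s (for \<open>k \<ge> 2\<close> both minima equal \<open>\<rho>\<^sub>k\<close>), so \<open>\<rho>\<^sub>1 - \<rho>\<^sub>j\<close> is nondecreasing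
  there. Adding a small increasing slack \<open>\<epsilon>(1 + t)\<close> makes this strict, and a
  first-touching-time argument shows that the gap plus slack never comes down to its
  initial value; let \<open>\<epsilon> \<rightarrow> 0\<close>.\<close>

lemma continuous_on_Max:
  fixes f :: "'i \<Rightarrow> 'a::topological_space \<Rightarrow> 'b::linorder_topology"
  assumes "finite J" "J \<noteq> {}" "\<And>j. j \<in> J \<Longrightarrow> continuous_on S (f j)"
  shows "continuous_on S (\<lambda>t. Max ((\<lambda>j. f j t) ` J))"
  using assms
proof (induction J rule: finite_ne_induct)
  case (singleton j)
  then show ?case by simp
next
  case (insert j J)
  then show ?case by (simp add: continuous_on_max)
qed

lemma above_level_if_no_first_touch:
  fixes f :: "real \<Rightarrow> real"
  assumes cont: "continuous_on {a..b} f" and start: "c < f a"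
    and touch: "\<And>s. a < s \<Longrightarrow> s \<le> b \<Longrightarrow> f s = c \<Longrightarrow> \<exists>t. a \<le> t \<and> t < s \<and> f t < c"
  shows "\<forall>t\<in>{a..b}. c < f t"
proof (rule ccontr)
  define S where "S = {a..b} \<inter> f -` {..c}"
  define s where "s = Inf S"
  assume "\<not> (\<forall>t\<in>{a..b}. c < f t)"
  then have "S \<noteq> {}" by (auto simp: S_def not_less)
  moreover have bdd: "bdd_below S" by (auto simp: S_def intro: bdd_belowI[of _ a])
  moreover have "closed S"
    unfolding S_def using cont by (rule continuous_closed_preimage) auto
  ultimately have "s \<in> S" unfolding s_def by (rule closed_contains_Inf)
  then have s: "a \<le> s" "s \<le> b" "f s \<le> c" by (auto simp: S_def)
  have first: "s \<le> t" if "t \<in> S" for t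
    unfolding s_def using bdd that by (rule cInf_lower[rotated])
  have "a < s" using s start by (cases "a = s") auto
  have "continuous_on {a..s} f" using cont by (rule continuous_on_subset) (use s(2) in auto)
  then obtain r where r: "a \<le> r" "r \<le> s" "f r = c"
    using IVT2'[of f s c a] s start by auto
  then have "r \<in> S" using s by (auto simp: S_def)
  with r first have "f s = c" by force
  then obtain t where "a \<le> t" "t < s" "f t < c" using touch \<open>a < s\<close> s by blast
  then have "t \<in> S" using s by (auto simp: S_def)
  with \<open>t < s\<close> first show False by force
qed

locale min_interaction_flow =
  fixes n :: nat and \<kappa> :: real and \<theta>t :: "real \<Rightarrow> real"
    and \<rho> :: "real \<Rightarrow> nat \<Rightarrow> real"
  assumes two_agents: "n \<ge> 2"
    and rate_nonneg: "\<kappa> \<ge> 0"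
    and weight_nonneg: "\<And>s. \<theta>t s \<ge> 0"
    and ode: "\<And>t j. t \<ge> 0 \<Longrightarrow> j \<in> {1..n} \<Longrightarrow>
       ((\<lambda>\<tau>. \<rho> \<tau> j) has_real_derivative
          \<kappa> * (\<Sum>k=1..n. \<theta>t (min (\<rho> t j) (\<rho> t k)) * (\<rho> t j - \<rho> t k)))
         (at t within {0..})"
begin

definition velocity :: "real \<Rightarrow> nat \<Rightarrow> real" where
  "velocity t j = \<kappa> * (\<Sum>k=1..n. \<theta>t (min (\<rho> t j) (\<rho> t k)) * (\<rho> t j - \<rho> t k))"

definition gap :: "real \<Rightarrow> real" where
  "gap t = \<rho> t 1 - Max ((\<lambda>j. \<rho> t j) ` {2..n})"

lemma has_velocity:
  "t \<ge> 0 \<Longrightarrow> j \<in> {1..n} \<Longrightarrow> ((\<lambda>\<tau>. \<rho> \<tau> j) has_real_derivative velocity t j) (at t within {0..})"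
  using ode by (simp add: velocity_def)

lemma continuous_on_gap: "continuous_on {0..} gap"
proof -
  have cont: "continuous_on {0..} (\<lambda>t. \<rho> t j)" if "j \<in> {1..n}" for j
    by (rule DERIV_continuous_on) (use has_velocity that in auto)
  have "continuous_on {0..} (\<lambda>t. Max ((\<lambda>j. \<rho> t j) ` {2..n}))"
    using two_agents by (intro continuous_on_Max cont) auto
  moreover have "continuous_on {0..} (\<lambda>t. \<rho> t 1)" using cont two_agents by simp
  ultimately show ?thesis unfolding gap_def by (intro continuous_on_diff)
qed

lemma obtain_leading_follower:
  obtains j where "j \<in> {2..n}" "\<forall>k\<in>{2..n}. \<rho> t k \<le> \<rho> t j" "gap t = \<rho> t 1 - \<rho> t j"
proof -
  have "Max ((\<lambda>j. \<rho> t j) ` {2..n}) \<in> (\<lambda>j. \<rho> t j) ` {2..n}"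
    using two_agents by (intro Max_in) auto
  then obtain j where "j \<in> {2..n}" "\<rho> t j = Max ((\<lambda>j. \<rho> t j) ` {2..n})" by auto
  then show thesis by (intro that) (auto simp: gap_def)
qed

lemma gap_le_follower: "j \<in> {2..n} \<Longrightarrow> gap t \<le> \<rho> t 1 - \<rho> t j"
  unfolding gap_def by (simp add: Max_ge)

lemma velocity_le_leader:
  assumes followers: "\<forall>k\<in>{2..n}. \<rho> t k \<le> \<rho> t j" and behind: "\<rho> t j \<le> \<rho> t 1"
  shows "velocity t j \<le> velocity t 1"
proof -
  have "\<theta>t (min (\<rho> t j) (\<rho> t k)) * (\<rho> t j - \<rho> t k)
      \<le> \<theta>t (min (\<rho> t 1) (\<rho> t k)) * (\<rho> t 1 - \<rho> t k)" if "k \<in> {1..n}" for k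
  proof (cases "k = 1")
    case True
    then show ?thesis using behind weight_nonneg[of "\<rho> t j"] by (simp add: mult_nonneg_nonpos)
  next
    case False
    with that followers have "\<rho> t k \<le> \<rho> t j" by auto
    with behind show ?thesis using weight_nonneg[of "\<rho> t k"] by (simp add: mult_left_mono)
  qed
  then show ?thesis
    unfolding velocity_def using rate_nonneg by (intro mult_left_mono sum_mono) auto
qed

lemma slack_gap_dips_before:
  assumes "0 < \<epsilon>" "0 < s" "0 \<le> gap s"
  shows "\<exists>t. 0 \<le> t \<and> t < s \<and> gap t + \<epsilon> * (1 + t) < gap s + \<epsilon> * (1 + s)"
proof -
  obtain j where j: "j \<in> {2..n}" "\<forall>k\<in>{2..n}. \<rho> s k \<le> \<rho> s j" "gap s = \<rho> s 1 - \<rho> s j"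
    by (rule obtain_leading_follower)
  define g where "g t = \<rho> t 1 - \<rho> t j + \<epsilon> * (1 + t)" for t
  have "(g has_real_derivative velocity s 1 - velocity s j + \<epsilon>) (at s within {0..})"
    unfolding g_def using assms(2) j(1) two_agents
    by (auto intro!: derivative_eq_intros has_velocity)
  moreover have "0 < velocity s 1 - velocity s j + \<epsilon>"
    using velocity_le_leader[OF j(2)] j(3) assms by linarith
  ultimately obtain d where d: "0 < d" "\<And>h. 0 < h \<Longrightarrow> s - h \<in> {0..} \<Longrightarrow> h < d \<Longrightarrow> g (s - h) < g s"
    using has_real_derivative_pos_inc_left by blast
  define t where "t = s - min (d/2) (s/2)"
  have t: "0 \<le> t" "t < s" "g t < g s" using d assms(2) by (auto simp: t_def)
  have "gap t + \<epsilon> * (1 + t) \<le> g t" using gap_le_follower[OF j(1)] by (simp add: g_def)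
  also have "\<dots> < g s" by (fact t(3))
  also have "\<dots> = gap s + \<epsilon> * (1 + s)" by (simp add: g_def j(3))
  finally show ?thesis using t(1,2) by blast
qed

lemma slack_gap_stays_above_initial:
  assumes "0 \<le> T" "0 < \<epsilon>" "\<epsilon> * (1 + T) < gap 0"
  shows "\<forall>t\<in>{0..T}. gap 0 < gap t + \<epsilon> * (1 + t)"
proof (rule above_level_if_no_first_touch)
  show "continuous_on {0..T} (\<lambda>t. gap t + \<epsilon> * (1 + t))"
    by (intro continuous_intros continuous_on_subset[OF continuous_on_gap]) auto
  show "gap 0 < gap 0 + \<epsilon> * (1 + 0)" using assms(2) by simp
next
  fix s assume s: "0 < s" "s \<le> T" and touch: "gap s + \<epsilon> * (1 + s) = gap 0"
  have "\<epsilon> * (1 + s) \<le> \<epsilon> * (1 + T)" using s assms(2) by simp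
  then have "0 \<le> gap s" using touch assms(3) by linarith
  from slack_gap_dips_before[OF assms(2) s(1) this] touch
  show "\<exists>t. 0 \<le> t \<and> t < s \<and> gap t + \<epsilon> * (1 + t) < gap 0" by simp
qed

lemma gap_ge_initial:
  assumes "0 < gap 0" "0 \<le> t"
  shows "gap 0 \<le> gap t"
proof (rule field_le_epsilon)
  fix e :: real assume "0 < e"
  define \<epsilon> where "\<epsilon> = min e (gap 0) / (2 * (1 + t))"
  have slack: "\<epsilon> * (1 + t) = min e (gap 0) / 2" using assms(2) by (simp add: \<epsilon>_def field_simps)
  have "0 < \<epsilon>" using \<open>0 < e\<close> assms by (simp add: \<epsilon>_def)
  moreover have "\<epsilon> * (1 + t) < gap 0" using slack assms(1) by linarith
  ultimately have "gap 0 < gap t + \<epsilon> * (1 + t)"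
    using slack_gap_stays_above_initial[of t] assms(2) by auto
  moreover have "min e (gap 0) \<le> e" by simp
  ultimately show "gap 0 \<le> gap t + e" using slack \<open>0 < e\<close> by linarith
qed

end

theorem lemma3p4:
  fixes n :: nat and \<kappa> :: real and \<theta>t :: "real \<Rightarrow> real"
    and \<rho> :: "real \<Rightarrow> nat \<Rightarrow> real"
  assumes n2: "n \<ge> 2"
    and kpos: "\<kappa> > 0"
    and lip: "locally_lipschitz \<theta>t"
    and mono: "mono \<theta>t"
    and nonneg: "\<And>s. \<theta>t s \<ge> 0"
    and zero: "\<And>s. s \<le> 0 \<Longrightarrow> \<theta>t s = 0"
    and pos: "\<And>s. s > 0 \<Longrightarrow> \<theta>t s > 0"
    and ode: "\<And>t j. t \<ge> 0 \<Longrightarrow> j \<in> {1..n} \<Longrightarrow>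
       ((\<lambda>\<tau>. \<rho> \<tau> j) has_real_derivative
          \<kappa> * (\<Sum>k=1..n. \<theta>t (min (\<rho> t j) (\<rho> t k)) * (\<rho> t j - \<rho> t k)))
         (at t within {0..})"
    and init: "\<rho> 0 \<in> prob_simplex n"
    and gap: "\<rho> 0 1 > Max ((\<lambda>j. \<rho> 0 j) ` {2..n})"
  shows "\<forall>t\<ge>0. \<rho> t 1 - Max ((\<lambda>j. \<rho> t j) ` {2..n})
                 \<ge> \<rho> 0 1 - Max ((\<lambda>j. \<rho> 0 j) ` {2..n})"
proof -
  interpret min_interaction_flow n \<kappa> \<theta>t \<rho>
    using n2 kpos nonneg ode by unfold_locales auto
  have "0 < gap 0" using gap by (simp add: gap_def)
  then show ?thesis using gap_ge_initial by (simp add: gap_def)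
qed

end
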